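(* Fix $s\in\mathbb{N}^+$. If $m$ is sufficiently large (depending on $s$), then for every graph $G$, all positive integers $r_1,\dots,r_s$, every $i\in[s]$ and every homomorphism $\varphi$ from $F_i^{\bullet\bullet}$ (viewed as an ordinary digraph) to $T_G^\bigstar$, there is a single pair $(j,k)$ with $j\in[s]$, $k\in[r_j]$ such that $\varphi(V(F_i^{\bullet\bullet}))\subseteq V(T_{j*k})$.
   Context: All digraphs are finite and loopless; a tournament is a digraph in which every pair of distinct vertices is joined by exactly one arc. A homomorphism from a digraph $F$ to a digraph $H$ is a map $\varphi:V(F)\to V(H)$ with $(\varphi(u),\varphi(v))\in E(H)$ whenever $(u,v)\in E(F)$. Construction of $F_i^{\bullet\bullet}$: fix $s$, a positive integer $m$, and a tournament $F_0$ on vertex set $[m]$ satisfying: (I) every vertex has out-degree and in-degree at most $2m/3$; (II) there are no disjoint $A_1,A_2\subseteq[m]$ with $|A_1|=|A_2|=\lceil\sqrt m\,\rceil$ such that $(a_1,a_2)$ is an arc for all $a_1\in A_1,a_2\in A_2$; (III) for every $S\subseteq[m]$ with $|S|\ge 2m/13-\sqrt m$, $F_0[S]$ contains a directed cycle. Let $k_1,\dots,k_s$ be integers in $(2m/3+2,\,5m/6)$ with $k_i>k_{i+1}+1$. $F_i^{\bullet\bullet}$ is the digraph on $[m]\cup\{z_i,w_i\}$ (roots $z_i,w_i$) whose arcs are the arcs of $F_0$, plus $z_i\to v$, $v\to w_i$ for $1\le v\le k_i$, plus $u\to z_i$, $w_i\to u$ for $k_i<u\le m$. The symmetrization $F_i^{\dagger\bullet\bullet}$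 is obtained from two disjoint copies of $F_i^{\bullet\bullet}$, the "left" copy with roots $z^1,w^1$ and the "right" copy with roots $z^2,w^2$, by identifying $z^1$ with $w^2$ (root $z_i$) and $w^1$ with $z^2$ (root $w_i$). Construction of $T_G^\bigstar$: let $G$ be a graph on $[n]$ and $r_1,\dots,r_s\in\mathbb{N}^+$. For $i\in[s]$ the tournament $T_i$ is built as follows. (1) $T_0$ is the transitive tournament on $[n]$ with arcs $a\to b$ for $a<b$; $T_0[G]$ is its sub-digraph with arcs $(a,b)$, $a<b$, $ab\in E(G)$. Order the arcs of $T_0[G]$ by $(x,y)\succ(a,b)$ iff $x+y>a+b$, or $x+y=a+b$ and $x>a$. (2) For each arc $e=(a,b)$ of $T_0[G]$ attach a new copy of $F_i^{\dagger\bullet\bullet}$ with root $z_i$ identified with $a$ and root $w_i$ with $b$ (so in the left copy $\overleftarrow{F_i^e}$ the roots $z,w$ are $a,b$, and in the right copy $\overrightarrow{F_i^e}$ they are $b,a$). Let $V_e$ be the $2m$ non-root vertices of this copy and $V_0=\bigcup_e V_e$. (3) Add all arcs $x\to y$ with $x$ a non-root vertex of $\overleftarrow{F_i^e}$ and $y$ a non-root vertex of $\overrightarrow{F_i^e}$. (4) For each arc $e=(a,b)$ of $T_0[G]$ and each $x\in[n]\setminus\{a,b\}$, add arcs $x\to v$ for all $v\in V_e$. (5) For arcs $e_1\succ e_2$ of $T_0[G]$, add all arcs $x\to y$ with $x\in V_{e_1}$, $y\in V_{e_2}$. Then $T_G^\bigstar$ is the tournament formed by disjoint copies $T_{i*k}$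 of $T_i$ for $i\in[s]$, $k\in[r_i]$, with all arcs $u\to v$ for $u\in V(T_{i_1*k_1})$, $v\in V(T_{i_2*k_2})$ whenever $i_1<i_2$, or $i_1=i_2$ and $k_1<k_2$. The base of $T_{i*k}$ is its copy of $T_0$, and $T_{i*k}[G]$ denotes the copy of $T_0[G]$ in it. *)

theory Defs
  imports Complex_Main
begin

definition tournament :: "'a set \<Rightarrow> ('a \<times> 'a) set \<Rightarrow> bool" where
  "tournament V A \<longleftrightarrow> A \<subseteq> V \<times> V \<and> (\<forall>v. (v, v) \<notin> A) \<and>
     (\<forall>u\<in>V. \<forall>v\<in>V. u \<noteq> v \<longrightarrow> ((u, v) \<in> A \<longleftrightarrow> (v, u) \<notin> A))"

definition digraph_hom :: "'a set \<Rightarrow> ('a \<times> 'a) set \<Rightarrow> 'b set \<Rightarrow> ('b \<times> 'b) set \<Rightarrow> ('a \<Rightarrow> 'b) \<Rightarrow> bool" where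
  "digraph_hom VF AF VH AH \<phi> \<longleftrightarrow> (\<forall>v\<in>VF. \<phi> v \<in> VH) \<and> (\<forall>u v. (u, v) \<in> AF \<longrightarrow> (\<phi> u, \<phi> v) \<in> AH)"

definition has_dcycle_in :: "('a \<times> 'a) set \<Rightarrow> 'a set \<Rightarrow> bool" where
  "has_dcycle_in A S \<longleftrightarrow> (\<exists>xs. length xs \<ge> 2 \<and> distinct xs \<and> set xs \<subseteq> S \<and>
     (\<forall>j<length xs. (xs ! j, xs ! ((j + 1) mod length xs)) \<in> A))"

definition graph_on :: "nat \<Rightarrow> (nat \<Rightarrow> nat \<Rightarrow> bool) \<Rightarrow> bool" where
  "graph_on n G \<longleftrightarrow> (\<forall>a b. G a b \<longrightarrow> a \<in> {1..n} \<and> b \<in> {1..n} \<and> a \<noteq> b \<and> G b a)"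

definition good_F0 :: "nat \<Rightarrow> (nat \<times> nat) set \<Rightarrow> bool" where
  "good_F0 m F0 \<longleftrightarrow> tournament {1..m} F0
   \<and> (\<forall>v\<in>{1..m}. real (card {u. (v, u) \<in> F0}) \<le> 2 * real m / 3
                 \<and> real (card {u. (u, v) \<in> F0}) \<le> 2 * real m / 3)
   \<and> \<not> (\<exists>A1 A2. A1 \<subseteq> {1..m} \<and> A2 \<subseteq> {1..m} \<and> A1 \<inter> A2 = {}
          \<and> card A1 = nat \<lceil>sqrt (real m)\<rceil> \<and> card A2 = nat \<lceil>sqrt (real m)\<rceil>
          \<and> (\<forall>a1\<in>A1. \<forall>a2\<in>A2. (a1, a2) \<in> F0))
   \<and> (\<forall>S. S \<subseteq> {1..m} \<and> real (card S) \<ge> 2 * real m / 13 - sqrt (real m)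
          \<longrightarrow> has_dcycle_in F0 S)"

definition good_ks :: "nat \<Rightarrow> nat \<Rightarrow> (nat \<Rightarrow> int) \<Rightarrow> bool" where
  "good_ks s m k \<longleftrightarrow>
     (\<forall>i\<in>{1..s}. 2 * real m / 3 + 2 < real_of_int (k i) \<and> real_of_int (k i) < 5 * real m / 6)
   \<and> (\<forall>i. 1 \<le> i \<and> i < s \<longrightarrow> k i > k (i + 1) + 1)"

datatype fvert = FN nat | FZ | FW   (* FN v: v in [m];  FZ = root z_i;  FW = root w_i *)

definition F_verts :: "nat \<Rightarrow> fvert set" where
  "F_verts m = FN ` {1..m} \<union> {FZ, FW}"

definition F_arcs :: "nat \<Rightarrow> (nat \<times> nat) set \<Rightarrow> int \<Rightarrow> (fvert \<times> fvert) set" where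
  "F_arcs m F0 ki =
     {(FN u, FN v) | u v. (u, v) \<in> F0}
   \<union> {(FZ, FN v) | v. v \<in> {1..m} \<and> int v \<le> ki}
   \<union> {(FN v, FW) | v. v \<in> {1..m} \<and> int v \<le> ki}
   \<union> {(FN u, FZ) | u. u \<in> {1..m} \<and> ki < int u}
   \<union> {(FW, FN u) | u. u \<in> {1..m} \<and> ki < int u}"

text \<open>Vertices of T_i: base vertices Base a (a in [n]) and gadget vertices
  Gad e l v: vertex v in [m] of the left (l = True) resp. right (l = False) copy
  of F_i^{bullet bullet} attached to the arc e of T_0[G].\<close>
datatype tvert = Base nat | Gad "nat \<times> nat" bool nat

definition G_arcs :: "nat \<Rightarrow> (nat \<Rightarrow> nat \<Rightarrow> bool) \<Rightarrow> (nat \<times> nat) set" where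
  "G_arcs n G = {(a, b). 1 \<le> a \<and> a < b \<and> b \<le> n \<and> G a b}"

definition arc_succ :: "nat \<times> nat \<Rightarrow> nat \<times> nat \<Rightarrow> bool" where
  "arc_succ e1 e2 \<longleftrightarrow> (case e1 of (x, y) \<Rightarrow> case e2 of (a, b) \<Rightarrow>
      x + y > a + b \<or> (x + y = a + b \<and> x > a))"

definition T_verts :: "nat \<Rightarrow> nat \<Rightarrow> (nat \<Rightarrow> nat \<Rightarrow> bool) \<Rightarrow> tvert set" where
  "T_verts m n G = Base ` {1..n} \<union> {Gad e l v | e l v. e \<in> G_arcs n G \<and> v \<in> {1..m}}"

definition gz :: "nat \<times> nat \<Rightarrow> bool \<Rightarrow> nat" where
  "gz e l = (if l then fst e else snd e)"
definition gw :: "nat \<times> nat \<Rightarrow> bool \<Rightarrow> nat" where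
  "gw e l = (if l then snd e else fst e)"

definition T_arcs :: "nat \<Rightarrow> (nat \<times> nat) set \<Rightarrow> int \<Rightarrow> nat \<Rightarrow> (nat \<Rightarrow> nat \<Rightarrow> bool) \<Rightarrow> (tvert \<times> tvert) set" where
  "T_arcs m F0 ki n G =
     \<comment> \<open>(1) transitive tournament T_0 on [n]\<close>
     {(Base a, Base b) | a b. 1 \<le> a \<and> a < b \<and> b \<le> n}
     \<comment> \<open>(2) the copies of F_0 inside each gadget copy\<close>
   \<union> {(Gad e l u, Gad e l v) | e l u v. e \<in> G_arcs n G \<and> (u, v) \<in> F0}
     \<comment> \<open>(2) root arcs of each gadget copy\<close>
   \<union> {(Base (gz e l), Gad e l v) | e l v. e \<in> G_arcs n G \<and> v \<in> {1..m} \<and> int v \<le> ki}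
   \<union> {(Gad e l v, Base (gw e l)) | e l v. e \<in> G_arcs n G \<and> v \<in> {1..m} \<and> int v \<le> ki}
   \<union> {(Gad e l u, Base (gz e l)) | e l u. e \<in> G_arcs n G \<and> u \<in> {1..m} \<and> ki < int u}
   \<union> {(Base (gw e l), Gad e l u) | e l u. e \<in> G_arcs n G \<and> u \<in> {1..m} \<and> ki < int u}
     \<comment> \<open>(3) left copy to right copy\<close>
   \<union> {(Gad e True u, Gad e False v) | e u v. e \<in> G_arcs n G \<and> u \<in> {1..m} \<and> v \<in> {1..m}}
     \<comment> \<open>(4) other base vertices dominate the gadget\<close>
   \<union> {(Base x, Gad e l v) | x e l v. e \<in> G_arcs n G \<and> x \<in> {1..n} \<and> x \<noteq> fst e \<and> x \<noteq> snd e
                                  \<and> v \<in> {1..m}}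
     \<comment> \<open>(5) gadgets of larger arcs dominate gadgets of smaller arcs\<close>
   \<union> {(Gad e1 l1 u, Gad e2 l2 v) | e1 l1 u e2 l2 v. e1 \<in> G_arcs n G \<and> e2 \<in> G_arcs n G
                                  \<and> arc_succ e1 e2 \<and> u \<in> {1..m} \<and> v \<in> {1..m}}"

text \<open>T_G^star: vertex (i, k, x) is the vertex x of the copy T_{i*k} of T_i.\<close>
definition Star_verts :: "nat \<Rightarrow> (nat \<Rightarrow> nat) \<Rightarrow> nat \<Rightarrow> nat \<Rightarrow> (nat \<Rightarrow> nat \<Rightarrow> bool) \<Rightarrow> (nat \<times> nat \<times> tvert) set" where
  "Star_verts s r m n G = {(i, k, x) | i k x. i \<in> {1..s} \<and> k \<in> {1..r i} \<and> x \<in> T_verts m n G}"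

definition block :: "nat \<Rightarrow> nat \<Rightarrow> (nat \<Rightarrow> nat \<Rightarrow> bool) \<Rightarrow> nat \<Rightarrow> nat \<Rightarrow> (nat \<times> nat \<times> tvert) set" where
  "block m n G j k = {(j, k, x) | x. x \<in> T_verts m n G}"

definition Star_arcs :: "nat \<Rightarrow> (nat \<Rightarrow> nat) \<Rightarrow> nat \<Rightarrow> (nat \<times> nat) set \<Rightarrow> (nat \<Rightarrow> int) \<Rightarrow> nat
      \<Rightarrow> (nat \<Rightarrow> nat \<Rightarrow> bool) \<Rightarrow> ((nat \<times> nat \<times> tvert) \<times> (nat \<times> nat \<times> tvert)) set" where
  "Star_arcs s r m F0 k n G =
     {((i1, k1, x), (i2, k2, y)) | i1 k1 x i2 k2 y.
        (i1, k1, x) \<in> Star_verts s r m n G \<and> (i2, k2, y) \<in> Star_verts s r m n G \<and>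
        (i1 < i2 \<or> (i1 = i2 \<and> k1 < k2) \<or>
         (i1 = i2 \<and> k1 = k2 \<and> (x, y) \<in> T_arcs m F0 (k i1) n G))}"

end

theory Submission
  imports Defs "HOL-Library.Product_Lexorder"
begin

text \<open>Every arc of \<open>T_G^\<star>\<close> goes weakly forward in the lexicographic order of the
  block indices \<open>(j, k)\<close> of the copies \<open>T_{j*k}\<close>. In \<open>F_i^{\<bullet>\<bullet>}\<close> the roots lie on the
  two directed paths \<open>z \<rightarrow> 1 \<rightarrow> w\<close> and \<open>w \<rightarrow> m \<rightarrow> z\<close> (as \<open>1 \<le> k_i < m\<close>), so a homomorphism
  sends \<open>z\<close> and \<open>w\<close> to the same block, and every other vertex lies on a path
  \<open>z \<rightarrow> v \<rightarrow> w\<close> or \<open>w \<rightarrow> v \<rightarrow> z\<close>, hence in that block as well.\<close>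

definition block_index :: "nat \<times> nat \<times> tvert \<Rightarrow> nat \<times> nat" where
  "block_index p = (fst p, fst (snd p))"

lemma Star_arcs_block_index_mono:
  assumes "(p, q) \<in> Star_arcs s r m F0 k n G"
  shows "block_index p \<le> block_index q"
  using assms unfolding Star_arcs_def block_index_def by (auto simp: less_eq_prod_def)

lemma mem_block_of_block_index:
  assumes "p \<in> Star_verts s r m n G" and "block_index p = (j, kk)"
  shows "j \<in> {1..s}" "kk \<in> {1..r j}" "p \<in> block m n G j kk"
  using assms unfolding Star_verts_def block_def block_index_def by auto

lemma F_arcs_monotone_imp_constant:
  fixes f :: "fvert \<Rightarrow> 'b::order"
  assumes mono: "\<And>u v. (u, v) \<in> F_arcs m F0 ki \<Longrightarrow> f u \<le> f v"
    and "1 \<le> ki" "ki < int m" and "v \<in> F_verts m"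
  shows "f v = f FZ"
proof -
  have low: "f FZ \<le> f (FN u) \<and> f (FN u) \<le> f FW" if "u \<in> {1..m}" "int u \<le> ki" for u
    using that by (intro conjI mono) (auto simp: F_arcs_def)
  have high: "f FW \<le> f (FN u) \<and> f (FN u) \<le> f FZ" if "u \<in> {1..m}" "ki < int u" for u
    using that by (intro conjI mono) (auto simp: F_arcs_def)
  have "1 \<le> m" using assms(2,3) by linarith
  then have roots: "f FW = f FZ"
    using low[of 1] high[of m] assms(2,3) by (auto intro: order.trans order.antisym)
  show ?thesis
  proof (cases v)
    case (FN u)
    then have "u \<in> {1..m}" using assms(4) by (auto simp: F_verts_def)
    then show ?thesis
      using FN low[of u] high[of u] roots by (cases "int u \<le> ki") (auto intro: order.antisym)
  qed (use roots in auto)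
qed

theorem lemma4p7:
  fixes s :: nat
  assumes "s \<ge> 1"
  shows "\<exists>M::nat. \<forall>m\<ge>M. \<forall>(F0 :: (nat \<times> nat) set) (k :: nat \<Rightarrow> int).
           good_F0 m F0 \<and> good_ks s m k \<longrightarrow>
           (\<forall>(n::nat) (G :: nat \<Rightarrow> nat \<Rightarrow> bool) (r :: nat \<Rightarrow> nat) (i::nat) (\<phi> :: fvert \<Rightarrow> nat \<times> nat \<times> tvert).
              graph_on n G \<and> (\<forall>j\<in>{1..s}. r j \<ge> 1) \<and> i \<in> {1..s} \<and>
              digraph_hom (F_verts m) (F_arcs m F0 (k i))
                          (Star_verts s r m n G) (Star_arcs s r m F0 k n G) \<phi>
              \<longrightarrow> (\<exists>j\<in>{1..s}. \<exists>kk\<in>{1..r j}. \<phi> ` F_verts m \<subseteq> block m n G j kk))"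
proof (intro exI[of _ 0] allI impI)
  fix m F0 k n G r i and \<phi> :: "fvert \<Rightarrow> nat \<times> nat \<times> tvert"
  assume "good_F0 m F0 \<and> good_ks s m k"
    and h: "graph_on n G \<and> (\<forall>j\<in>{1..s}. r j \<ge> 1) \<and> i \<in> {1..s} \<and>
              digraph_hom (F_verts m) (F_arcs m F0 (k i))
                          (Star_verts s r m n G) (Star_arcs s r m F0 k n G) \<phi>"
  then have "2 * real m / 3 + 2 < real_of_int (k i)" "real_of_int (k i) < 5 * real m / 6"
    by (auto simp: good_ks_def)
  then have ki: "1 \<le> k i" "k i < int m" by linarith+
  have hom: "\<forall>v\<in>F_verts m. \<phi> v \<in> Star_verts s r m n G"
    "\<And>u v. (u, v) \<in> F_arcs m F0 (k i) \<Longrightarrow> (\<phi> u, \<phi> v) \<in> Star_arcs s r m F0 k n G"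
    using h by (auto simp: digraph_hom_def)
  obtain j kk where jk: "block_index (\<phi> FZ) = (j, kk)" by fastforce
  have same_block: "block_index (\<phi> v) = (j, kk)" if "v \<in> F_verts m" for v
    using F_arcs_monotone_imp_constant[of m F0 "k i" "block_index \<circ> \<phi>", OF _ ki that]
      Star_arcs_block_index_mono[OF hom(2)] jk by simp
  have "FZ \<in> F_verts m" by (simp add: F_verts_def)
  then have "j \<in> {1..s}" "kk \<in> {1..r j}"
    using mem_block_of_block_index(1,2) hom(1) jk by blast+
  moreover have "\<phi> ` F_verts m \<subseteq> block m n G j kk"
    using mem_block_of_block_index(3) hom(1) same_block by blast
  ultimately show "\<exists>j\<in>{1..s}. \<exists>kk\<in>{1..r j}. \<phi> ` F_verts m \<subseteq> block m n G j kk"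
    by blast
qed

end
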